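(* Let $m\in\mathbb{N}^+$ and let all random vectors below take values in $\mathbb{R}^m$ and have finite first moment. (i) (Independent sum) If $\bm A$ is independent of $\bm X$ and of $\bm Y$, then $S_2^2(\bm A+\bm X,\bm A+\bm Y)\le S_2^2(\bm X,\bm Y)$. (ii) (Scaling) For every $c>0$, $S_2^2(c\bm X,c\bm Y)=c\,S_2^2(\bm X,\bm Y)$. (iii) (Unbiased sampling gradients) Let $P$ be a distribution on $\mathbb{R}^m$ with finite first moment, let $\bm X_1,\dots,\bm X_r$ be i.i.d. samples from $P$ with empirical distribution $\hat P=\frac1r(\delta_{\bm X_1}+\dots+\delta_{\bm X_r})$, and let $\{G_\theta\}_{\theta\in\Theta}$, $\Theta\subseteq\mathbb{R}^d$ open, be a family of distributions with finite first moment. Assume sufficient regularity that $\theta\mapsto S_2^2(G_\theta,P)$ and $\theta\mapsto C_2^2(\langle G_\theta,\bm\nu\rangle,\langle\hat P,\bm\nu\rangle)$ are differentiable and that $\nabla_\theta$ may be interchanged with expectation over the samples and with integration over $\bm\nu\in\mathbb{S}^{m-1}$. Then $$\mathbb{E}_{\bm X_1,\dots,\bm X_r\sim P}\left[\nabla_\theta S_2^2(G_\theta,\hat P)\right]=\nabla_\theta S_2^2(G_\theta,P),$$ and, if $\bm\nu$ is uniformly distributed on $\mathbb{S}^{m-1}$ independently of the samples, $$B_{m-1}\,\mathbb{E}_{\bm\nu}\,\mathbb{E}_{\bm X_1,\dots,\bm X_r\sim P}\left[\nabla_\theta C_2^2(\langle G_\theta,\bm\nu\rangle,\langle\hat P,\bm\nu\rangle)\right]=\nabla_\theta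 S_2^2(G_\theta,P),$$ where $B_{m-1}=2\pi^{m/2}/\Gamma(m/2)$.
   Context: For real random variables (or distributions on $\mathbb{R}$) $Z,W$ with CDFs $F_Z,F_W$, $C_2^2(Z,W)=\int_{\mathbb{R}}|F_Z-F_W|^2dx$. For random vectors (or distributions) $\bm X,\bm Y$ on $\mathbb{R}^m$, $S_2^2(\bm X,\bm Y)=\int_{\mathbb{S}^{m-1}}C_2^2(\langle\bm X,\bm\nu\rangle,\langle\bm Y,\bm\nu\rangle)\,d\bm\nu$, where $\langle\bm X,\bm\nu\rangle=\bm X^{\mathrm T}\bm\nu$, $\mathbb{S}^{m-1}$ is the unit sphere and $d\bm\nu$ its surface measure (of total mass $B_{m-1}=2\pi^{m/2}/\Gamma(m/2)$). For a distribution $Q$, $\langle Q,\bm\nu\rangle$ denotes the law of $\langle\bm Z,\bm\nu\rangle$ with $\bm Z\sim Q$. *)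

theory Defs
  imports "HOL-Probability.Probability"
begin

definition C2sq :: "real measure \<Rightarrow> real measure \<Rightarrow> real" where
  "C2sq Z W = (\<integral>x. (cdf Z x - cdf W x)\<^sup>2 \<partial>lborel)"

definition proj :: "(real ^ 'm) measure \<Rightarrow> real ^ 'm \<Rightarrow> real measure" where
  "proj Q \<nu> = distr Q borel (\<lambda>z. z \<bullet> \<nu>)"

text \<open>Surface measure on the unit sphere S^(m-1), defined as the cone measure:
  sigma(A) = m * Lebesgue measure of {t x | 0 < t <= 1, x in A}.\<close>
definition sphere_measure :: "(real ^ 'm) measure" where
  "sphere_measure = measure_of (sphere 0 1) (sets (restrict_space borel (sphere 0 1)))
     (\<lambda>A. ennreal (real CARD('m)) *
            emeasure lborel {t *\<^sub>R x | t x. t \<in> {0<..1} \<and> x \<in> A})"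

definition uniform_sphere :: "(real ^ 'm) measure" where
  "uniform_sphere = uniform_measure sphere_measure (sphere 0 1)"

definition S2sq :: "(real ^ 'm) measure \<Rightarrow> (real ^ 'm) measure \<Rightarrow> real" where
  "S2sq Q R = (\<integral>\<nu>. C2sq (proj Q \<nu>) (proj R \<nu>) \<partial>sphere_measure)"

definition empirical :: "nat \<Rightarrow> (nat \<Rightarrow> real ^ 'm) \<Rightarrow> (real ^ 'm) measure" where
  "empirical r xs = measure_of UNIV (sets borel)
     (\<lambda>A. ennreal (real (card {i \<in> {..<r}. xs i \<in> A}) / real r))"

definition grad :: "('a::real_inner \<Rightarrow> real) \<Rightarrow> 'a \<Rightarrow> 'a" where
  "grad f x = (THE D. GDERIV f x :> D)"

definition fm_dist :: "(real ^ 'm) measure \<Rightarrow> bool" where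
  "fm_dist Q \<longleftrightarrow> prob_space Q \<and> sets Q = sets borel \<and> integrable Q (\<lambda>z. norm z)"

definition iid_samples :: "nat \<Rightarrow> (real ^ 'm) measure \<Rightarrow> (nat \<Rightarrow> real ^ 'm) measure" where
  "iid_samples r P = PiM {..<r} (\<lambda>_. P)"

end

(*
  Everything reduces to the one-dimensional Cramer distances of the projections <X, nu>.

  (i) The distribution function of <A + X, nu> is the average over a ~ <A, nu> of the shifted
  distribution functions of <X, nu>; by Jensen's inequality and the translation invariance of
  Lebesgue measure, averaging shifts can only decrease the L2 distance of two such functions.
  (ii) The distribution function of <c X, nu> at x is that of <X, nu> at x / c, and the
  substitution x = c y multiplies the integral by c.
  (iii) The empirical distribution function is an unbiased estimate of the true one, so expanding
  the square gives E C(Q, P^) = C(Q, P) + E C(P, P^). The last term does not depend on theta, hence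
  the expected empirical loss and the population loss have the same gradient. Integrating over
  the sphere is justified by the bound C(Z, W) <= E|Z| + E|W|, and the uniform distribution on
  the sphere is the surface measure divided by its total mass B_(m-1).
*)
theory Submission
  imports Defs
begin

section \<open>Cramer distance on the real line\<close>

lemma cdf_distr:
  fixes g :: "'s \<Rightarrow> real"
  assumes "g \<in> borel_measurable M"
  shows "cdf (distr M borel g) x = measure M {\<omega>\<in>space M. g \<omega> \<le> x}"
  unfolding cdf_def using assms
  by (subst measure_distr) (auto intro!: arg_cong[where f="measure M"])

lemma (in finite_borel_measure) borel_measurable_cdf [measurable]: "cdf M \<in> borel_measurable borel"
  by (rule borel_measurable_mono) (simp add: mono_def cdf_nondecreasing)

lemma (in real_distribution) abs_cdf_diff_le_1:
  assumes "real_distribution N"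
  shows "\<bar>cdf M x - cdf N x\<bar> \<le> 1"
proof -
  interpret N: real_distribution N by fact
  show ?thesis
    using cdf_nonneg[of x] cdf_bounded_prob[of x] N.cdf_nonneg[of x] N.cdf_bounded_prob[of x] by linarith
qed

text \<open>The region between the graph of a distribution function and the unit step at 0 is
  \<open>{(x, z). z \<le> x < 0 \<or> 0 \<le> x < z}\<close>; integrating its indicator in \<open>x\<close> first gives \<open>\<bar>z\<bar>\<close>.\<close>
lemma (in real_distribution) nn_integral_abs_cdf_minus_step:
  "(\<integral>\<^sup>+x. ennreal \<bar>cdf M x - indicator {0..} x\<bar> \<partial>lborel) = (\<integral>\<^sup>+z. ennreal \<bar>z\<bar> \<partial>M)"
proof -
  interpret pair_sigma_finite lborel M
    unfolding pair_sigma_finite_def using lborel.sigma_finite_measure_axioms sigma_finite_measure_axioms by blast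
  define T where "T = (\<lambda>x z. (z \<le> x \<and> x < (0::real)) \<or> (0 \<le> x \<and> x < z))"
  have T_measurable: "(\<lambda>(x, z). indicator {p. T (fst p) (snd p)} (x, z) :: ennreal) \<in> borel_measurable (lborel \<Otimes>\<^sub>M M)"
    unfolding T_def by measurable
  have inner_M: "ennreal \<bar>cdf M x - indicator {0..} x\<bar> = (\<integral>\<^sup>+z. indicator {p. T (fst p) (snd p)} (x, z) \<partial>M)" for x
  proof -
    have "(\<integral>\<^sup>+z. indicator {p. T (fst p) (snd p)} (x, z) \<partial>M) = (\<integral>\<^sup>+z. indicator {z. T x z} z \<partial>M)"
      by (intro nn_integral_cong) (simp split: split_indicator)
    also have "\<dots> = emeasure M {z. T x z}"
      by (rule nn_integral_indicator) (unfold T_def, measurable)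
    also have "\<dots> = ennreal \<bar>cdf M x - indicator {0..} x\<bar>"
    proof (cases "x < 0")
      case True
      then have "{z. T x z} = {..x}" by (auto simp: T_def)
      then show ?thesis using True by (simp add: cdf_def emeasure_eq_measure cdf_nonneg)
    next
      case False
      then have "{z. T x z} = space M - {..x}" by (auto simp: T_def)
      then show ?thesis using False cdf_bounded_prob[of x] prob_compl[of "{..x}"]
        by (simp add: emeasure_eq_measure cdf_def)
    qed
    finally show ?thesis by simp
  qed
  have inner_lborel: "(\<integral>\<^sup>+x. indicator {p. T (fst p) (snd p)} (x, z) \<partial>lborel) = ennreal \<bar>z\<bar>" for z
  proof -
    have "(\<integral>\<^sup>+x. indicator {p. T (fst p) (snd p)} (x, z) \<partial>lborel)
        = (\<integral>\<^sup>+x. indicator (if z < 0 then {z..<0} else {0..<z}) x \<partial>lborel)"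
      by (intro nn_integral_cong) (auto simp: T_def split: split_indicator)
    then show ?thesis by simp
  qed
  have "(\<integral>\<^sup>+x. ennreal \<bar>cdf M x - indicator {0..} x\<bar> \<partial>lborel)
      = (\<integral>\<^sup>+x. (\<integral>\<^sup>+z. indicator {p. T (fst p) (snd p)} (x, z) \<partial>M) \<partial>lborel)"
    by (simp add: inner_M)
  also have "\<dots> = (\<integral>\<^sup>+z. (\<integral>\<^sup>+x. indicator {p. T (fst p) (snd p)} (x, z) \<partial>lborel) \<partial>M)"
    using Fubini[OF T_measurable[unfolded split_beta']] by (simp add: split_beta')
  also have "\<dots> = (\<integral>\<^sup>+z. ennreal \<bar>z\<bar> \<partial>M)" by (simp add: inner_lborel)
  finally show ?thesis .
qed

lemma nn_integral_abs_cdf_diff_le: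
  assumes "real_distribution Z" "real_distribution W"
  shows "(\<integral>\<^sup>+x. ennreal \<bar>cdf Z x - cdf W x\<bar> \<partial>lborel)
           \<le> (\<integral>\<^sup>+z. ennreal \<bar>z\<bar> \<partial>Z) + (\<integral>\<^sup>+z. ennreal \<bar>z\<bar> \<partial>W)"
proof -
  interpret Z: real_distribution Z by fact
  interpret W: real_distribution W by fact
  let ?H = "indicator {0..} :: real \<Rightarrow> real"
  have "(\<integral>\<^sup>+x. ennreal \<bar>cdf Z x - cdf W x\<bar> \<partial>lborel)
      \<le> (\<integral>\<^sup>+x. ennreal \<bar>cdf Z x - ?H x\<bar> + ennreal \<bar>cdf W x - ?H x\<bar> \<partial>lborel)"
    by (intro nn_integral_mono) (simp add: ennreal_plus[symmetric] del: ennreal_plus)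
  also have "\<dots> = (\<integral>\<^sup>+x. ennreal \<bar>cdf Z x - ?H x\<bar> \<partial>lborel) + (\<integral>\<^sup>+x. ennreal \<bar>cdf W x - ?H x\<bar> \<partial>lborel)"
    by (rule nn_integral_add) auto
  finally show ?thesis by (simp add: Z.nn_integral_abs_cdf_minus_step W.nn_integral_abs_cdf_minus_step)
qed

lemma nn_integral_abs_eq_integral:
  "integrable M (\<lambda>z. z) \<Longrightarrow> (\<integral>\<^sup>+z. ennreal \<bar>z\<bar> \<partial>M) = ennreal (\<integral>z. \<bar>z\<bar> \<partial>M)"
  by (rule nn_integral_eq_integral) auto

lemma
  assumes Z: "real_distribution Z" "integrable Z (\<lambda>z. z)"
    and W: "real_distribution W" "integrable W (\<lambda>z. z)"
  shows integrable_abs_cdf_diff: "integrable lborel (\<lambda>x. \<bar>cdf Z x - cdf W x\<bar>)"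
    and integrable_square_cdf_diff: "integrable lborel (\<lambda>x. (cdf Z x - cdf W x)\<^sup>2)"
    and C2sq_le_abs_moments: "C2sq Z W \<le> (\<integral>z. \<bar>z\<bar> \<partial>Z) + (\<integral>z. \<bar>z\<bar> \<partial>W)"
proof -
  interpret Z: real_distribution Z by fact
  interpret W: real_distribution W by fact
  have bound: "(\<integral>\<^sup>+x. ennreal \<bar>cdf Z x - cdf W x\<bar> \<partial>lborel) \<le> ennreal ((\<integral>z. \<bar>z\<bar> \<partial>Z) + (\<integral>z. \<bar>z\<bar> \<partial>W))"
    using nn_integral_abs_cdf_diff_le[OF Z(1) W(1)]
    by (simp add: nn_integral_abs_eq_integral Z(2) W(2) ennreal_plus[symmetric] del: ennreal_plus)
  show abs_int: "integrable lborel (\<lambda>x. \<bar>cdf Z x - cdf W x\<bar>)"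
    by (rule integrableI_bounded) (use bound in \<open>auto simp: top.not_eq_extremum intro: le_less_trans\<close>)
  have square_le: "(cdf Z x - cdf W x)\<^sup>2 \<le> \<bar>cdf Z x - cdf W x\<bar>" for x
  proof -
    have "\<bar>cdf Z x - cdf W x\<bar> * \<bar>cdf Z x - cdf W x\<bar> \<le> \<bar>cdf Z x - cdf W x\<bar>"
      using Z.abs_cdf_diff_le_1[OF W(1), of x] by (intro mult_left_le) auto
    then show ?thesis by (simp add: power2_eq_square)
  qed
  show sq_int: "integrable lborel (\<lambda>x. (cdf Z x - cdf W x)\<^sup>2)"
    by (rule Bochner_Integration.integrable_bound[OF abs_int]) (use square_le in auto)
  have "C2sq Z W \<le> (\<integral>x. \<bar>cdf Z x - cdf W x\<bar> \<partial>lborel)"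
    unfolding C2sq_def by (rule integral_mono[OF sq_int abs_int square_le])
  also have "\<dots> \<le> (\<integral>z. \<bar>z\<bar> \<partial>Z) + (\<integral>z. \<bar>z\<bar> \<partial>W)"
  proof -
    have "ennreal (\<integral>x. \<bar>cdf Z x - cdf W x\<bar> \<partial>lborel) \<le> ennreal ((\<integral>z. \<bar>z\<bar> \<partial>Z) + (\<integral>z. \<bar>z\<bar> \<partial>W))"
      using bound by (subst nn_integral_eq_integral[symmetric]) (use abs_int in auto)
    moreover have "0 \<le> (\<integral>z. \<bar>z\<bar> \<partial>Z) + (\<integral>z. \<bar>z\<bar> \<partial>W)" by simp
    ultimately show ?thesis by (simp del: ennreal_plus)
  qed
  finally show "C2sq Z W \<le> (\<integral>z. \<bar>z\<bar> \<partial>Z) + (\<integral>z. \<bar>z\<bar> \<partial>W)" .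
qed

lemma C2sq_nonneg: "0 \<le> C2sq Z W"
  unfolding C2sq_def by simp

lemma C2sq_distr_scale:
  fixes g h :: "'s \<Rightarrow> real"
  assumes [measurable]: "g \<in> borel_measurable M" "h \<in> borel_measurable M" and c: "c > 0"
  shows "C2sq (distr M borel (\<lambda>\<omega>. c * g \<omega>)) (distr M borel (\<lambda>\<omega>. c * h \<omega>))
       = c * C2sq (distr M borel g) (distr M borel h)"
proof -
  let ?F = "\<lambda>x. (cdf (distr M borel g) x - cdf (distr M borel h) x)\<^sup>2"
  have scaled: "(cdf (distr M borel (\<lambda>\<omega>. c * g \<omega>)) x - cdf (distr M borel (\<lambda>\<omega>. c * h \<omega>)) x)\<^sup>2
     = ?F (x / c)" for x
  proof -
    have "{\<omega>\<in>space M. c * g \<omega> \<le> x} = {\<omega>\<in>space M. g \<omega> \<le> x / c}"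
         "{\<omega>\<in>space M. c * h \<omega> \<le> x} = {\<omega>\<in>space M. h \<omega> \<le> x / c}"
      using c by (auto simp: field_simps)
    then show ?thesis by (simp add: cdf_distr)
  qed
  have "C2sq (distr M borel (\<lambda>\<omega>. c * g \<omega>)) (distr M borel (\<lambda>\<omega>. c * h \<omega>))
      = (\<integral>x. ?F (x / c) \<partial>lborel)" unfolding C2sq_def by (simp add: scaled)
  also have "\<dots> = \<bar>c\<bar> *\<^sub>R (\<integral>x. ?F ((0 + c * x) / c) \<partial>lborel)"
    by (rule lborel_integral_real_affine) (use c in auto)
  also have "\<dots> = c * C2sq (distr M borel g) (distr M borel h)"
    using c unfolding C2sq_def by simp
  finally show ?thesis .
qed

lemma cdf_distr_add_indep:
  fixes a x :: "'s \<Rightarrow> real"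
  assumes "prob_space M" and indep: "prob_space.indep_var M borel a borel x"
  shows "cdf (distr M borel (\<lambda>\<omega>. a \<omega> + x \<omega>)) t = (\<integral>s. cdf (distr M borel x) (t - s) \<partial>distr M borel a)"
proof -
  interpret prob_space M by fact
  have [measurable]: "a \<in> borel_measurable M" "x \<in> borel_measurable M"
    using indep_var_rv1[OF indep] indep_var_rv2[OF indep] by auto
  let ?Da = "distr M borel a" and ?Dx = "distr M borel x"
  interpret Da: real_distribution ?Da by simp
  interpret Dx: real_distribution ?Dx by simp
  define B where "B = {p::real \<times> real. fst p + snd p \<le> t}"
  have "{p \<in> space (borel \<Otimes>\<^sub>M borel). fst p + snd p \<le> (t::real)} \<in> sets (borel \<Otimes>\<^sub>M borel)"
    by measurable
  then have B_sets: "B \<in> sets (?Da \<Otimes>\<^sub>M ?Dx)" by (simp add: B_def space_pair_measure)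
  have "cdf (distr M borel (\<lambda>\<omega>. a \<omega> + x \<omega>)) t = measure (distr M (borel \<Otimes>\<^sub>M borel) (\<lambda>\<omega>. (a \<omega>, x \<omega>))) B"
    using B_sets by (simp add: cdf_distr measure_distr B_def vimage_def Int_def conj_commute)
  also have "\<dots> = measure (?Da \<Otimes>\<^sub>M ?Dx) B"
    using indep by (simp add: indep_var_distribution_eq)
  also have "\<dots> = enn2real (\<integral>\<^sup>+s. emeasure ?Dx (Pair s -` B) \<partial>?Da)"
    by (simp add: measure_def Dx.emeasure_pair_measure_alt[OF B_sets])
  also have "(\<integral>\<^sup>+s. emeasure ?Dx (Pair s -` B) \<partial>?Da) = (\<integral>\<^sup>+s. ennreal (cdf ?Dx (t - s)) \<partial>?Da)"
  proof (intro nn_integral_cong)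
    fix s
    have "Pair s -` B = {..t - s}" by (auto simp: B_def)
    then show "emeasure ?Dx (Pair s -` B) = ennreal (cdf ?Dx (t - s))"
      by (simp add: cdf_def Dx.emeasure_eq_measure)
  qed
  also have "\<dots> = ennreal (\<integral>s. cdf ?Dx (t - s) \<partial>?Da)"
    by (rule nn_integral_eq_integral)
       (auto intro!: Da.integrable_const_bound[where B=1] simp: Dx.cdf_nonneg Dx.cdf_bounded_prob)
  finally show ?thesis by (simp add: integral_nonneg_AE Dx.cdf_nonneg)
qed

text \<open>Convolving with a probability distribution does not increase the \<open>L\<^sup>2\<close> norm: by Jensen,
  \<open>(E G(t - s))\<^sup>2 \<le> E G(t - s)\<^sup>2\<close>, and Lebesgue measure is translation invariant.\<close>
lemma nn_integral_square_convolution_le: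
  fixes G :: "real \<Rightarrow> real"
  assumes "real_distribution D" and [measurable]: "G \<in> borel_measurable borel" and G_bounded: "\<And>u. \<bar>G u\<bar> \<le> 1"
  shows "(\<integral>\<^sup>+t. ennreal ((\<integral>s. G (t - s) \<partial>D)\<^sup>2) \<partial>lborel) \<le> (\<integral>\<^sup>+u. ennreal ((G u)\<^sup>2) \<partial>lborel)"
proof -
  interpret D: real_distribution D by fact
  interpret pair_sigma_finite lborel D
    unfolding pair_sigma_finite_def using lborel.sigma_finite_measure_axioms D.sigma_finite_measure_axioms by blast
  have G_square_bounded: "\<bar>(G u)\<^sup>2\<bar> \<le> 1" for u
    using power_le_one[OF abs_ge_zero G_bounded[of u], of 2] by simp
  have integrable_shift: "integrable D (\<lambda>s. H (t - s))"
    if "H \<in> borel_measurable borel" "\<And>u. \<bar>H u\<bar> \<le> 1" for H :: "real \<Rightarrow> real" and t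
    by (rule D.integrable_const_bound[where B=1]) (use that in auto)
  have jensen: "(\<integral>s. G (t - s) \<partial>D)\<^sup>2 \<le> (\<integral>s. (G (t - s))\<^sup>2 \<partial>D)" for t
    by (rule D.jensens_inequality[where I=UNIV and q=power2, OF integrable_shift _ _ integrable_shift convex_power2])
       (use G_bounded G_square_bounded in auto)
  have "(\<integral>\<^sup>+t. ennreal ((\<integral>s. G (t - s) \<partial>D)\<^sup>2) \<partial>lborel) \<le> (\<integral>\<^sup>+t. (\<integral>\<^sup>+s. ennreal ((G (t - s))\<^sup>2) \<partial>D) \<partial>lborel)"
  proof (intro nn_integral_mono)
    fix t
    have "(\<integral>\<^sup>+s. ennreal ((G (t - s))\<^sup>2) \<partial>D) = ennreal (\<integral>s. (G (t - s))\<^sup>2 \<partial>D)"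
      by (rule nn_integral_eq_integral) (auto intro: integrable_shift G_square_bounded)
    then show "ennreal ((\<integral>s. G (t - s) \<partial>D)\<^sup>2) \<le> (\<integral>\<^sup>+s. ennreal ((G (t - s))\<^sup>2) \<partial>D)"
      using jensen[of t] by (simp add: ennreal_leI)
  qed
  also have "\<dots> = (\<integral>\<^sup>+s. (\<integral>\<^sup>+t. ennreal ((G (t - s))\<^sup>2) \<partial>lborel) \<partial>D)"
    by (rule Fubini'[symmetric]) measurable
  also have "\<dots> = (\<integral>\<^sup>+s. (\<integral>\<^sup>+u. ennreal ((G u)\<^sup>2) \<partial>lborel) \<partial>D)"
    using nn_integral_real_affine[of "\<lambda>u. ennreal ((G u)\<^sup>2)" 1 "- _"] by simp
  also have "\<dots> = (\<integral>\<^sup>+u. ennreal ((G u)\<^sup>2) \<partial>lborel)"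
    using D.emeasure_space_1 by simp
  finally show ?thesis .
qed

lemma C2sq_distr_add_indep_le:
  fixes a x y :: "'s \<Rightarrow> real"
  assumes M: "prob_space M" and indep_x: "prob_space.indep_var M borel a borel x"
    and indep_y: "prob_space.indep_var M borel a borel y"
    and "integrable M x" "integrable M y"
  shows "C2sq (distr M borel (\<lambda>\<omega>. a \<omega> + x \<omega>)) (distr M borel (\<lambda>\<omega>. a \<omega> + y \<omega>))
       \<le> C2sq (distr M borel x) (distr M borel y)"
proof -
  interpret prob_space M by fact
  have [measurable]: "a \<in> borel_measurable M" "x \<in> borel_measurable M" "y \<in> borel_measurable M"
    using indep_var_rv1[OF indep_x] indep_var_rv2[OF indep_x] indep_var_rv2[OF indep_y] by auto
  let ?Da = "distr M borel a" and ?Dx = "distr M borel x" and ?Dy = "distr M borel y"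
  interpret Da: real_distribution ?Da by simp
  interpret Dx: real_distribution ?Dx by simp
  interpret Dy: real_distribution ?Dy by simp
  interpret Dax: real_distribution "distr M borel (\<lambda>\<omega>. a \<omega> + x \<omega>)" by simp
  interpret Day: real_distribution "distr M borel (\<lambda>\<omega>. a \<omega> + y \<omega>)" by simp
  define G where "G u = cdf ?Dx u - cdf ?Dy u" for u
  have [measurable]: "G \<in> borel_measurable borel" unfolding G_def by measurable
  have moments: "integrable ?Dx (\<lambda>z. z)" "integrable ?Dy (\<lambda>z. z)"
    using assms(4,5) by (simp_all add: integrable_distr_eq)
  have convolution: "cdf (distr M borel (\<lambda>\<omega>. a \<omega> + x \<omega>)) t - cdf (distr M borel (\<lambda>\<omega>. a \<omega> + y \<omega>)) t
      = (\<integral>s. G (t - s) \<partial>?Da)" for t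
    unfolding G_def cdf_distr_add_indep[OF M indep_x] cdf_distr_add_indep[OF M indep_y]
    by (rule Bochner_Integration.integral_diff[symmetric])
       (auto intro!: Da.integrable_const_bound[where B=1]
             simp: Dx.cdf_nonneg Dx.cdf_bounded_prob Dy.cdf_nonneg Dy.cdf_bounded_prob)
  have "ennreal (C2sq (distr M borel (\<lambda>\<omega>. a \<omega> + x \<omega>)) (distr M borel (\<lambda>\<omega>. a \<omega> + y \<omega>)))
      \<le> (\<integral>\<^sup>+t. ennreal ((cdf (distr M borel (\<lambda>\<omega>. a \<omega> + x \<omega>)) t
                          - cdf (distr M borel (\<lambda>\<omega>. a \<omega> + y \<omega>)) t)\<^sup>2) \<partial>lborel)"
    unfolding C2sq_def by (subst integral_eq_nn_integral) (auto simp: ennreal_enn2real_if)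
  also have "\<dots> = (\<integral>\<^sup>+t. ennreal ((\<integral>s. G (t - s) \<partial>?Da)\<^sup>2) \<partial>lborel)"
    by (simp only: convolution)
  also have "\<dots> \<le> (\<integral>\<^sup>+u. ennreal ((G u)\<^sup>2) \<partial>lborel)"
    by (rule nn_integral_square_convolution_le) (auto simp: G_def Dx.abs_cdf_diff_le_1)
  also have "\<dots> = ennreal (C2sq ?Dx ?Dy)"
    unfolding C2sq_def G_def
    by (rule nn_integral_eq_integral) (auto intro: integrable_square_cdf_diff moments)
  finally show ?thesis by (simp add: C2sq_nonneg)
qed

section \<open>Projections and the sliced distance\<close>

lemma fm_distD:
  assumes "fm_dist D"
  shows "prob_space D" "sets D = sets borel" "integrable D (\<lambda>z. z)"
proof -
  show "prob_space D" and sets_D: "sets D = sets borel" using assms by (auto simp: fm_dist_def)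
  have "(\<lambda>z. z) \<in> borel_measurable D" unfolding measurable_cong_sets[OF sets_D refl] by simp
  then show "integrable D (\<lambda>z. z)" using assms integrable_norm_iff by (auto simp: fm_dist_def)
qed

lemma borel_measurable_fm_dist:
  assumes "fm_dist D" "f \<in> borel_measurable borel"
  shows "f \<in> borel_measurable D"
  using assms(2) unfolding measurable_cong_sets[OF fm_distD(2)[OF assms(1)] refl] .

lemma fm_dist_distr:
  assumes "prob_space M" and [measurable]: "X \<in> borel_measurable M" and "integrable M (\<lambda>\<omega>. norm (X \<omega>))"
  shows "fm_dist (distr M borel X)"
  unfolding fm_dist_def
  using prob_space.prob_space_distr[OF assms(1,2)] integrable_distr_eq[of X M borel norm] assms(3) by simp

lemma proj_distr:
  fixes X :: "'s \<Rightarrow> real ^ 'm"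
  assumes "X \<in> borel_measurable M"
  shows "proj (distr M borel X) \<nu> = distr M borel (\<lambda>\<omega>. X \<omega> \<bullet> \<nu>)"
  unfolding proj_def using assms by (subst distr_distr) (auto simp: comp_def)

lemma borel_measurable_inner_fm_dist [measurable]:
  "fm_dist D \<Longrightarrow> (\<lambda>z. z \<bullet> \<nu>) \<in> borel_measurable D"
  by (rule borel_measurable_fm_dist) simp_all

lemma real_distribution_proj: "fm_dist D \<Longrightarrow> real_distribution (proj D \<nu>)"
  unfolding proj_def
  by (rule prob_space.real_distribution_distr[OF fm_distD(1) borel_measurable_inner_fm_dist])

lemma integrable_proj: "fm_dist D \<Longrightarrow> integrable (proj D \<nu>) (\<lambda>x. x)"
  unfolding proj_def
  by (simp add: integrable_distr_eq[OF borel_measurable_inner_fm_dist] integrable_inner_left fm_distD(3))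

lemma integral_abs_proj_le:
  assumes "fm_dist D"
  shows "(\<integral>x. \<bar>x\<bar> \<partial>proj D \<nu>) \<le> norm \<nu> * (\<integral>z. norm z \<partial>D)"
proof -
  have "(\<integral>x. \<bar>x\<bar> \<partial>proj D \<nu>) = (\<integral>z. \<bar>z \<bullet> \<nu>\<bar> \<partial>D)"
    unfolding proj_def by (rule integral_distr[OF borel_measurable_inner_fm_dist[OF assms]]) simp
  also have "\<dots> \<le> (\<integral>z. norm \<nu> * norm z \<partial>D)"
  proof (rule integral_mono)
    show "integrable D (\<lambda>z. \<bar>z \<bullet> \<nu>\<bar>)"
      by (intro integrable_abs integrable_inner_left fm_distD(3)[OF assms])
    show "integrable D (\<lambda>z. norm \<nu> * norm z)"
      by (intro integrable_mult_right integrable_norm fm_distD(3)[OF assms])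
    show "\<bar>z \<bullet> \<nu>\<bar> \<le> norm \<nu> * norm z" for z
      using Cauchy_Schwarz_ineq2[of z \<nu>] by (simp add: mult.commute)
  qed
  finally show ?thesis by simp
qed

lemma C2sq_proj_le:
  assumes "fm_dist D" "fm_dist E"
  shows "C2sq (proj D \<nu>) (proj E \<nu>) \<le> norm \<nu> * ((\<integral>z. norm z \<partial>D) + (\<integral>z. norm z \<partial>E))"
  using C2sq_le_abs_moments[of "proj D \<nu>" "proj E \<nu>"] real_distribution_proj[OF assms(1)]
    real_distribution_proj[OF assms(2)] integrable_proj[OF assms(1)] integrable_proj[OF assms(2)]
    integral_abs_proj_le[OF assms(1), of \<nu>] integral_abs_proj_le[OF assms(2), of \<nu>]
  by (simp add: distrib_left)

lemma cdf_proj: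
  fixes D :: "(real ^ 'm) measure"
  assumes "sets D = sets borel"
  shows "cdf (proj D \<nu>) x = measure D {z. z \<bullet> \<nu> \<le> x}"
proof -
  have "(\<lambda>z. z \<bullet> \<nu>) \<in> borel_measurable D"
    unfolding measurable_cong_sets[OF assms refl] by simp
  then show ?thesis
    unfolding proj_def using sets_eq_imp_space_eq[OF assms] by (simp add: cdf_distr)
qed

lemma borel_measurable_cdf_proj:
  fixes D :: "(real ^ 'm) measure"
  assumes sets_D: "sets D = sets borel" and "finite_measure D"
  shows "(\<lambda>(\<nu>, x). cdf (proj D \<nu>) x) \<in> borel_measurable (borel \<Otimes>\<^sub>M borel :: ((real ^ 'm) \<times> real) measure)"
proof -
  interpret finite_measure D by fact
  define f where "f p z = (indicator {z. z \<bullet> fst p \<le> snd p} z :: real)" for p :: "(real ^ 'm) \<times> real" and z :: "real ^ 'm"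
  have cdf_eq: "cdf (proj D \<nu>) x = (\<integral>z. f (\<nu>, x) z \<partial>D)" for \<nu> x
  proof -
    have "{z :: real ^ 'm. z \<bullet> \<nu> \<le> x} \<in> sets D" unfolding sets_D by measurable
    then show ?thesis by (simp add: f_def cdf_proj[OF sets_D] emeasure_eq_measure)
  qed
  have "case_prod f \<in> borel_measurable ((borel \<Otimes>\<^sub>M borel) \<Otimes>\<^sub>M D)"
    unfolding f_def measurable_cong_sets[OF sets_pair_measure_cong[OF refl sets_D] refl] by measurable
  then have "(\<lambda>p. \<integral>z. f p z \<partial>D) \<in> borel_measurable (borel \<Otimes>\<^sub>M borel)"
    by (rule borel_measurable_lebesgue_integral)
  then show ?thesis by (simp add: cdf_eq split_beta')
qed

lemma measurable_cdf_proj [measurable]: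
  fixes D :: "(real ^ 'm) measure"
  assumes "sets D = sets borel" "finite_measure D"
    and [measurable]: "V \<in> borel_measurable N" "T \<in> borel_measurable N"
  shows "(\<lambda>w. cdf (proj D (V w)) (T w)) \<in> borel_measurable N"
  using measurable_compose[of "\<lambda>w. (V w, T w)" N "borel \<Otimes>\<^sub>M borel", OF _ borel_measurable_cdf_proj[OF assms(1,2)]]
  by simp

lemma borel_measurable_C2sq_proj:
  fixes D E :: "(real ^ 'm) measure"
  assumes "fm_dist D" "fm_dist E"
  shows "(\<lambda>\<nu>. C2sq (proj D \<nu>) (proj E \<nu>)) \<in> borel_measurable borel"
  unfolding C2sq_def
proof (rule lborel.borel_measurable_lebesgue_integral)
  have [measurable]:
      "(\<lambda>(\<nu>, x). cdf (proj D \<nu>) x) \<in> borel_measurable (borel \<Otimes>\<^sub>M borel :: ((real ^ 'm) \<times> real) measure)"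
      "(\<lambda>(\<nu>, x). cdf (proj E \<nu>) x) \<in> borel_measurable (borel \<Otimes>\<^sub>M borel :: ((real ^ 'm) \<times> real) measure)"
    using assms by (auto intro!: borel_measurable_cdf_proj fm_distD prob_space.finite_measure)
  show "(\<lambda>(\<nu>, x). (cdf (proj D \<nu>) x - cdf (proj E \<nu>) x)\<^sup>2) \<in> borel_measurable (borel \<Otimes>\<^sub>M lborel)"
    unfolding measurable_cong_sets[OF sets_pair_measure_cong[OF refl sets_lborel] refl]
    by (simp add: split_beta')
qed

lemma sets_sphere_measure: "sets (sphere_measure :: (real ^ 'm) measure) = sets (restrict_space borel (sphere 0 1))"
proof -
  have sa: "sigma_algebra (sphere (0::real ^ 'm) 1) (sets (restrict_space borel (sphere (0::real ^ 'm) 1)))"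
    using sets.sigma_algebra_axioms[of "restrict_space borel (sphere (0::real ^ 'm) 1)"]
    by (simp add: space_restrict_space)
  then have "sets (restrict_space borel (sphere (0::real ^ 'm) 1)) \<subseteq> Pow (sphere 0 1)"
    by (simp add: sigma_algebra_iff2)
  then show ?thesis unfolding sphere_measure_def
    by (simp only: sets_measure_of sigma_algebra.sigma_sets_eq[OF sa])
qed

lemma space_sphere_measure: "space (sphere_measure :: (real ^ 'm) measure) = sphere 0 1"
  unfolding sphere_measure_def by (simp add: space_measure_of_conv)

lemma borel_measurable_sphere_measure:
  "f \<in> borel_measurable borel \<Longrightarrow> f \<in> borel_measurable (sphere_measure :: (real ^ 'm) measure)"
  unfolding measurable_cong_sets[OF sets_sphere_measure refl] by (rule measurable_restrict_space1)

lemma finite_measure_sphere_measure: "finite_measure (sphere_measure :: (real ^ 'm) measure)"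
proof (rule finite_measureI)
  let ?C = "{t *\<^sub>R x | t x. t \<in> {0<..1} \<and> x \<in> sphere (0::real ^ 'm) 1}"
  have "?C \<subseteq> cball 0 1" by (auto simp: norm_scaleR)
  then have "emeasure lborel ?C \<le> emeasure lborel (cball (0::real ^ 'm) 1)"
    by (intro emeasure_mono) auto
  also have "\<dots> < \<infinity>" by (simp add: emeasure_cball)
  finally have "ennreal (real CARD('m)) * emeasure lborel ?C < \<infinity>"
    by (simp add: ennreal_mult_less_top)
  then show "emeasure (sphere_measure :: (real ^ 'm) measure) (space sphere_measure) \<noteq> \<infinity>"
    unfolding space_sphere_measure unfolding sphere_measure_def emeasure_measure_of_conv
    by (simp add: top.not_eq_extremum)
qed

lemma integrable_C2sq_proj_sphere:
  fixes D E :: "(real ^ 'm) measure"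
  assumes "fm_dist D" "fm_dist E"
  shows "integrable sphere_measure (\<lambda>\<nu>. C2sq (proj D \<nu>) (proj E \<nu>))"
proof (rule finite_measure.integrable_const_bound[OF finite_measure_sphere_measure])
  show "(\<lambda>\<nu>. C2sq (proj D \<nu>) (proj E \<nu>)) \<in> borel_measurable sphere_measure"
    by (intro borel_measurable_sphere_measure borel_measurable_C2sq_proj assms)
  show "AE \<nu> in sphere_measure. norm (C2sq (proj D \<nu>) (proj E \<nu>)) \<le> (\<integral>z. norm z \<partial>D) + (\<integral>z. norm z \<partial>E)"
  proof (rule AE_I2)
    fix \<nu> :: "real ^ 'm" assume "\<nu> \<in> space sphere_measure"
    then show "norm (C2sq (proj D \<nu>) (proj E \<nu>)) \<le> (\<integral>z. norm z \<partial>D) + (\<integral>z. norm z \<partial>E)"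
      using C2sq_proj_le[OF assms, of \<nu>] by (simp add: space_sphere_measure C2sq_nonneg)
  qed
qed

lemma S2sq_mono:
  fixes D E D' E' :: "(real ^ 'm) measure"
  assumes "fm_dist D'" "fm_dist E'"
    and "\<And>\<nu>. \<nu> \<in> sphere 0 1 \<Longrightarrow> C2sq (proj D \<nu>) (proj E \<nu>) \<le> C2sq (proj D' \<nu>) (proj E' \<nu>)"
  shows "S2sq D E \<le> S2sq D' E'"
  unfolding S2sq_def
  by (rule integral_mono'[OF integrable_C2sq_proj_sphere[OF assms(1,2)]])
     (use assms(3) in \<open>auto simp: space_sphere_measure C2sq_nonneg\<close>)

lemma S2sq_distr_add_indep_le:
  fixes X Y A :: "'s \<Rightarrow> real ^ 'm"
  assumes M: "prob_space M" and [measurable]: "X \<in> borel_measurable M" "Y \<in> borel_measurable M"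
    and "integrable M (\<lambda>\<omega>. norm (X \<omega>))" "integrable M (\<lambda>\<omega>. norm (Y \<omega>))"
    and indep_X: "prob_space.indep_var M borel A borel X" and indep_Y: "prob_space.indep_var M borel A borel Y"
  shows "S2sq (distr M borel (\<lambda>\<omega>. A \<omega> + X \<omega>)) (distr M borel (\<lambda>\<omega>. A \<omega> + Y \<omega>))
          \<le> S2sq (distr M borel X) (distr M borel Y)"
proof (rule S2sq_mono)
  show "fm_dist (distr M borel X)" "fm_dist (distr M borel Y)"
    using assms by (auto intro: fm_dist_distr)
  have [measurable]: "A \<in> borel_measurable M"
    using prob_space.indep_var_rv1[OF M indep_X] by simp
  have integrable: "integrable M X" "integrable M Y"
    using assms(4,5) integrable_norm_iff[OF assms(2)] integrable_norm_iff[OF assms(3)] by auto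
  fix \<nu> :: "real ^ 'm"
  have inner_measurable: "(\<lambda>z::real ^ 'm. z \<bullet> \<nu>) \<in> borel_measurable borel" by simp
  have "C2sq (distr M borel (\<lambda>\<omega>. A \<omega> \<bullet> \<nu> + X \<omega> \<bullet> \<nu>)) (distr M borel (\<lambda>\<omega>. A \<omega> \<bullet> \<nu> + Y \<omega> \<bullet> \<nu>))
      \<le> C2sq (distr M borel (\<lambda>\<omega>. X \<omega> \<bullet> \<nu>)) (distr M borel (\<lambda>\<omega>. Y \<omega> \<bullet> \<nu>))"
    using prob_space.indep_var_compose[OF M indep_X inner_measurable inner_measurable]
      prob_space.indep_var_compose[OF M indep_Y inner_measurable inner_measurable] integrable
    by (intro C2sq_distr_add_indep_le[OF M]) (auto simp: comp_def)
  then show "C2sq (proj (distr M borel (\<lambda>\<omega>. A \<omega> + X \<omega>)) \<nu>) (proj (distr M borel (\<lambda>\<omega>. A \<omega> + Y \<omega>)) \<nu>)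
      \<le> C2sq (proj (distr M borel X) \<nu>) (proj (distr M borel Y) \<nu>)"
    by (simp add: proj_distr inner_add_left)
qed

lemma S2sq_distr_scale:
  fixes X Y :: "'s \<Rightarrow> real ^ 'm"
  assumes [measurable]: "X \<in> borel_measurable M" "Y \<in> borel_measurable M" and "c > 0"
  shows "S2sq (distr M borel (\<lambda>\<omega>. c *\<^sub>R X \<omega>)) (distr M borel (\<lambda>\<omega>. c *\<^sub>R Y \<omega>))
          = c * S2sq (distr M borel X) (distr M borel Y)"
  using C2sq_distr_scale[of "\<lambda>\<omega>. X \<omega> \<bullet> _" M "\<lambda>\<omega>. Y \<omega> \<bullet> _" c] \<open>c > 0\<close>
  by (simp add: S2sq_def proj_distr)

section \<open>Empirical distributions of i.i.d. samples\<close>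

lemma empirical_eq_distr:
  fixes xs :: "nat \<Rightarrow> real ^ 'm"
  assumes "r > 0"
  shows "empirical r xs = distr (uniform_count_measure {..<r}) borel xs"
proof -
  let ?U = "uniform_count_measure {..<r}"
  let ?R = "distr ?U borel xs"
  have "?R = measure_of UNIV (sets borel) (emeasure ?R)"
    using measure_of_of_measure[of ?R] by simp
  also have "\<dots> = empirical r xs"
    unfolding empirical_def
  proof (rule measure_of_eq)
    fix A assume "A \<in> sigma_sets (UNIV :: (real ^ 'm) set) (sets borel)"
    then have "A \<in> sets borel" by (metis sets.sigma_sets_eq space_borel)
    moreover have "xs -` A \<inter> space ?U = {i \<in> {..<r}. xs i \<in> A}"
      by (auto simp: space_uniform_count_measure)
    moreover have "emeasure ?U {i \<in> {..<r}. xs i \<in> A} = real (card {i \<in> {..<r}. xs i \<in> A}) / real (card {..<r})"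
      by (rule emeasure_uniform_count_measure) auto
    ultimately show "emeasure ?R A = ennreal (real (card {i \<in> {..<r}. xs i \<in> A}) / real r)"
      by (simp add: emeasure_distr)
  qed auto
  finally show ?thesis ..
qed

lemma fm_dist_empirical:
  fixes xs :: "nat \<Rightarrow> real ^ 'm"
  assumes "r > 0"
  shows "fm_dist (empirical r xs)"
  unfolding empirical_eq_distr[OF assms]
proof (rule fm_dist_distr)
  show "prob_space (uniform_count_measure {..<r})"
    by (rule prob_space_uniform_count_measure) (use assms in auto)
  show "integrable (uniform_count_measure {..<r}) (\<lambda>i. norm (xs i))"
    unfolding uniform_count_measure_def by (rule integrable_point_measure_finite) auto
qed simp

lemma integral_norm_empirical:
  fixes xs :: "nat \<Rightarrow> real ^ 'm"
  assumes "r > 0"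
  shows "(\<integral>z. norm z \<partial>empirical r xs) = (\<Sum>i<r. norm (xs i)) / real r"
  unfolding empirical_eq_distr[OF assms]
  by (simp add: integral_distr integral_uniform_count_measure)

lemma cdf_proj_empirical:
  fixes xs :: "nat \<Rightarrow> real ^ 'm"
  assumes "r > 0"
  shows "cdf (proj (empirical r xs) \<nu>) x = (\<Sum>i<r. indicator {z. z \<bullet> \<nu> \<le> x} (xs i)) / real r"
proof -
  have "cdf (proj (empirical r xs) \<nu>) x = measure (empirical r xs) {z. z \<bullet> \<nu> \<le> x}"
    by (rule cdf_proj[OF fm_distD(2)[OF fm_dist_empirical[OF assms]]])
  also have "\<dots> = measure (uniform_count_measure {..<r}) {i \<in> {..<r}. xs i \<bullet> \<nu> \<le> x}"
    unfolding empirical_eq_distr[OF assms]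
    by (subst measure_distr) (auto simp: space_uniform_count_measure intro!: arg_cong2[where f=measure])
  also have "\<dots> = real (card {i \<in> {..<r}. xs i \<bullet> \<nu> \<le> x}) / real r"
    by (subst measure_uniform_count_measure) auto
  also have "real (card {i \<in> {..<r}. xs i \<bullet> \<nu> \<le> x}) = (\<Sum>i<r. indicator {z. z \<bullet> \<nu> \<le> x} (xs i))"
    by (simp add: indicator_def Int_def)
  finally show ?thesis .
qed

lemma measurable_cdf_proj_empirical [measurable]:
  fixes X :: "'w \<Rightarrow> nat \<Rightarrow> real ^ 'm"
  assumes "r > 0" and X: "\<And>i. i < r \<Longrightarrow> (\<lambda>w. X w i) \<in> borel_measurable N"
    and [measurable]: "V \<in> borel_measurable N" "T \<in> borel_measurable N"
  shows "(\<lambda>w. cdf (proj (empirical r (X w)) (V w)) (T w)) \<in> borel_measurable N"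
proof -
  have [measurable]: "(\<lambda>w. X w i) \<in> borel_measurable N" if "i \<in> {..<r}" for i
    using X that by simp
  show ?thesis
    unfolding cdf_proj_empirical[OF \<open>r > 0\<close>] by measurable
qed

lemma prob_space_iid_samples: "prob_space P \<Longrightarrow> prob_space (iid_samples r P)"
  unfolding iid_samples_def by (rule prob_space_PiM) auto

lemma measurable_iid_component:
  "i < r \<Longrightarrow> (\<lambda>xs. xs i) \<in> measurable (iid_samples r P) P"
  unfolding iid_samples_def by (rule measurable_component_singleton) simp

lemma borel_measurable_iid_component [measurable]:
  assumes "sets P = sets borel" "i < r"
  shows "(\<lambda>xs. xs i) \<in> borel_measurable (iid_samples r P)"
  using measurable_iid_component[OF assms(2), of P] unfolding measurable_cong_sets[OF refl assms(1)] .

lemma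
  fixes f :: "real ^ 'm \<Rightarrow> real"
  assumes "prob_space P" "i < r" "f \<in> borel_measurable P"
  shows integral_iid_component: "(\<integral>xs. f (xs i) \<partial>iid_samples r P) = (\<integral>z. f z \<partial>P)"
    and integrable_iid_component: "integrable P f \<Longrightarrow> integrable (iid_samples r P) (\<lambda>xs. f (xs i))"
proof -
  have "distr (iid_samples r P) P (\<lambda>xs. xs i) = P"
    unfolding iid_samples_def by (rule distr_PiM_component) (use assms in auto)
  then show "(\<integral>xs. f (xs i) \<partial>iid_samples r P) = (\<integral>z. f z \<partial>P)"
    and "integrable P f \<Longrightarrow> integrable (iid_samples r P) (\<lambda>xs. f (xs i))"
    using integral_distr[OF measurable_iid_component[OF assms(2)] assms(3)]
      integrable_distr_eq[OF measurable_iid_component[OF assms(2)] assms(3)] by simp_all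
qed

lemma
  fixes P :: "(real ^ 'm) measure"
  assumes "fm_dist P" "r > 0"
  shows integral_cdf_proj_empirical:
      "(\<integral>xs. cdf (proj (empirical r xs) \<nu>) x \<partial>iid_samples r P) = cdf (proj P \<nu>) x"
    and integrable_cdf_proj_empirical:
      "integrable (iid_samples r P) (\<lambda>xs. cdf (proj (empirical r xs) \<nu>) x)"
proof -
  interpret P: prob_space P using fm_distD(1)[OF assms(1)] .
  let ?f = "indicator {z. z \<bullet> \<nu> \<le> x} :: real ^ 'm \<Rightarrow> real"
  have f_measurable: "?f \<in> borel_measurable P" by (rule borel_measurable_fm_dist[OF assms(1)]) simp
  have "integrable P ?f"
  proof (rule P.integrable_const_bound[where B=1])
    show "AE z in P. norm (?f z) \<le> 1" by (rule AE_I2) simp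
  qed (rule f_measurable)
  then have integrable_components: "integrable (iid_samples r P) (\<lambda>xs. ?f (xs i))" if "i < r" for i
    by (rule integrable_iid_component[OF P.prob_space_axioms that f_measurable])
  have "(\<integral>xs. cdf (proj (empirical r xs) \<nu>) x \<partial>iid_samples r P)
      = (\<integral>xs. (\<Sum>i<r. ?f (xs i)) \<partial>iid_samples r P) / real r"
    by (simp add: cdf_proj_empirical[OF assms(2)])
  also have "\<dots> = (\<Sum>i<r. \<integral>xs. ?f (xs i) \<partial>iid_samples r P) / real r"
    by (subst Bochner_Integration.integral_sum) (use integrable_components in auto)
  also have "\<dots> = (\<integral>z. ?f z \<partial>P)"
    using assms(2) integral_iid_component[OF P.prob_space_axioms _ f_measurable] by simp
  also have "\<dots> = cdf (proj P \<nu>) x"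
  proof -
    have "{z :: real ^ 'm. z \<bullet> \<nu> \<le> x} \<in> sets P" unfolding fm_distD(2)[OF assms(1)] by measurable
    then show ?thesis by (simp add: cdf_proj[OF fm_distD(2)[OF assms(1)]])
  qed
  finally show "(\<integral>xs. cdf (proj (empirical r xs) \<nu>) x \<partial>iid_samples r P) = cdf (proj P \<nu>) x" .
  show "integrable (iid_samples r P) (\<lambda>xs. cdf (proj (empirical r xs) \<nu>) x)"
    unfolding cdf_proj_empirical[OF assms(2)] using integrable_components
    by (intro integrable_divide integrable_sum) auto
qed

lemma measurable_C2sq_proj_empirical [measurable]:
  fixes D :: "(real ^ 'm) measure" and X :: "'w \<Rightarrow> nat \<Rightarrow> real ^ 'm"
  assumes "fm_dist D" "r > 0" and X: "\<And>i. i < r \<Longrightarrow> (\<lambda>w. X w i) \<in> borel_measurable N"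
    and V: "V \<in> borel_measurable N"
  shows "(\<lambda>w. C2sq (proj D (V w)) (proj (empirical r (X w)) (V w))) \<in> borel_measurable N"
  unfolding C2sq_def
proof (rule lborel.borel_measurable_lebesgue_integral)
  note [measurable] = measurable_cdf_proj[OF fm_distD(2) prob_space.finite_measure[OF fm_distD(1)], OF assms(1,1)]
    measurable_cdf_proj_empirical[OF assms(2)]
  have [measurable]: "(\<lambda>p. X (fst p) i) \<in> borel_measurable (N \<Otimes>\<^sub>M lborel)" if "i < r" for i
    using X[OF that] by measurable
  have [measurable]: "(\<lambda>p. V (fst p)) \<in> borel_measurable (N \<Otimes>\<^sub>M lborel)" using V by measurable
  show "(\<lambda>(w, x). (cdf (proj D (V w)) x - cdf (proj (empirical r (X w)) (V w)) x)\<^sup>2) \<in> borel_measurable (N \<Otimes>\<^sub>M lborel)"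
    unfolding split_beta' by measurable
qed

lemma C2sq_proj_empirical_le:
  fixes D :: "(real ^ 'm) measure"
  assumes "fm_dist D" "r > 0"
  shows "C2sq (proj D \<nu>) (proj (empirical r xs) \<nu>)
           \<le> norm \<nu> * ((\<integral>z. norm z \<partial>D) + (\<Sum>i<r. norm (xs i)) / real r)"
  using C2sq_proj_le[OF assms(1) fm_dist_empirical[OF assms(2)]] by (simp add: integral_norm_empirical[OF assms(2)])

lemma integrable_mean_norm_iid:
  fixes P :: "(real ^ 'm) measure"
  assumes "fm_dist P"
  shows "integrable (iid_samples r P) (\<lambda>xs. (\<Sum>i<r. norm (xs i)) / real r)"
proof -
  have "integrable (iid_samples r P) (\<lambda>xs. norm (xs i))" if "i < r" for i
    by (rule integrable_iid_component[OF fm_distD(1)[OF assms] that borel_measurable_fm_dist[OF assms]])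
       (use assms in \<open>auto simp: fm_dist_def\<close>)
  then show ?thesis by (intro integrable_divide integrable_sum) auto
qed

lemma integrable_C2sq_proj_empirical:
  fixes D P :: "(real ^ 'm) measure"
  assumes "fm_dist D" "fm_dist P" "r > 0"
  shows "integrable (iid_samples r P) (\<lambda>xs. C2sq (proj D \<nu>) (proj (empirical r xs) \<nu>))"
proof (rule Bochner_Integration.integrable_bound)
  interpret prob_space "iid_samples r P" by (rule prob_space_iid_samples[OF fm_distD(1)[OF assms(2)]])
  show "integrable (iid_samples r P) (\<lambda>xs. norm \<nu> * ((\<integral>z. norm z \<partial>D) + (\<Sum>i<r. norm (xs i)) / real r))"
    by (intro integrable_mult_right Bochner_Integration.integrable_add integrable_const integrable_mean_norm_iid assms(2))
  show "(\<lambda>xs. C2sq (proj D \<nu>) (proj (empirical r xs) \<nu>)) \<in> borel_measurable (iid_samples r P)"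
    using fm_distD(2)[OF assms(2)] by (intro measurable_C2sq_proj_empirical assms(1,3)) auto
  show "AE xs in iid_samples r P. norm (C2sq (proj D \<nu>) (proj (empirical r xs) \<nu>))
      \<le> norm (norm \<nu> * ((\<integral>z. norm z \<partial>D) + (\<Sum>i<r. norm (xs i)) / real r))"
    using C2sq_proj_empirical_le[OF assms(1,3)]
    by (intro AE_I2) (simp add: C2sq_nonneg, meson abs_ge_self order_trans)
qed

lemma integrable_pair_measure_fst:
  fixes f :: "'a \<Rightarrow> real"
  assumes "sigma_finite_measure M1" "finite_measure M2" "integrable M1 f"
  shows "integrable (M1 \<Otimes>\<^sub>M M2) (\<lambda>p. f (fst p))"
proof (rule integrableI_bounded)
  interpret M2: finite_measure M2 by fact
  interpret pair_sigma_finite M1 M2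
    unfolding pair_sigma_finite_def using assms(1) M2.sigma_finite_measure_axioms by blast
  have [measurable]: "f \<in> borel_measurable M1" using assms(3) by auto
  show "(\<lambda>p. f (fst p)) \<in> borel_measurable (M1 \<Otimes>\<^sub>M M2)" by measurable
  have "(\<integral>\<^sup>+p. ennreal (norm (f (fst p))) \<partial>(M1 \<Otimes>\<^sub>M M2)) = (\<integral>\<^sup>+x. ennreal (norm (f x)) * emeasure M2 (space M2) \<partial>M1)"
    by (subst M2.nn_integral_fst[symmetric]) auto
  also have "\<dots> = (\<integral>\<^sup>+x. ennreal (norm (f x)) \<partial>M1) * emeasure M2 (space M2)"
    by (rule nn_integral_multc) measurable
  also have "\<dots> < \<infinity>"
    using assms(3) M2.emeasure_finite
    by (simp add: integrable_iff_bounded ennreal_mult_eq_top_iff less_top[symmetric])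
  finally show "(\<integral>\<^sup>+p. ennreal (norm (f (fst p))) \<partial>(M1 \<Otimes>\<^sub>M M2)) < \<infinity>" .
qed

lemma integrable_pair_measure_snd:
  fixes f :: "'b \<Rightarrow> real"
  assumes "finite_measure M1" "sigma_finite_measure M2" "integrable M2 f"
  shows "integrable (M1 \<Otimes>\<^sub>M M2) (\<lambda>p. f (snd p))"
proof -
  interpret pair_sigma_finite M1 M2
    unfolding pair_sigma_finite_def using assms(1,2) finite_measure.sigma_finite_measure by blast
  show ?thesis
    using integrable_product_swap_iff[of "\<lambda>p. f (snd p)"] integrable_pair_measure_fst[OF assms(2,1,3)]
    by (simp add: split_beta')
qed

text \<open>Pointwise, \<open>(a - e)\<^sup>2 - (F - e)\<^sup>2 = (a - F) (a + F - 2 e)\<close> is affine in \<open>e\<close>, so if \<open>e\<close> has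
  mean \<open>F\<close> its expectation is \<open>(a - F)\<^sup>2\<close>; the bound \<open>2 \<bar>a - F\<bar>\<close> justifies Fubini.\<close>
lemma integral_square_diff_unbiased:
  fixes a F :: "real \<Rightarrow> real" and e :: "'w \<Rightarrow> real \<Rightarrow> real"
  assumes "prob_space I"
    and [measurable]: "a \<in> borel_measurable borel" "F \<in> borel_measurable borel"
      "(\<lambda>(x, w). e w x) \<in> borel_measurable (lborel \<Otimes>\<^sub>M I)"
    and range: "\<And>x. a x \<in> {0..1}" "\<And>x. F x \<in> {0..1}" "\<And>w x. e w x \<in> {0..1}"
    and "integrable lborel (\<lambda>x. \<bar>a x - F x\<bar>)"
    and mean: "\<And>x. integrable I (\<lambda>w. e w x)" "\<And>x. (\<integral>w. e w x \<partial>I) = F x"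
    and square_integrable: "\<And>w. integrable lborel (\<lambda>x. (a x - e w x)\<^sup>2)" "\<And>w. integrable lborel (\<lambda>x. (F x - e w x)\<^sup>2)"
  shows "(\<integral>w. (\<integral>x. (a x - e w x)\<^sup>2 \<partial>lborel) - (\<integral>x. (F x - e w x)\<^sup>2 \<partial>lborel) \<partial>I) = (\<integral>x. (a x - F x)\<^sup>2 \<partial>lborel)"
proof -
  interpret I: prob_space I by fact
  interpret pair_sigma_finite lborel I
    unfolding pair_sigma_finite_def using lborel.sigma_finite_measure_axioms I.sigma_finite_measure_axioms by blast
  define g where "g x w = (a x - F x) * (a x + F x - 2 * e w x)" for x w
  have g_integrable: "integrable (lborel \<Otimes>\<^sub>M I) (case_prod g)"
  proof (rule Bochner_Integration.integrable_bound)
    show "integrable (lborel \<Otimes>\<^sub>M I) (\<lambda>p. 2 * \<bar>a (fst p) - F (fst p)\<bar>)"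
      using integrable_pair_measure_fst[OF lborel.sigma_finite_measure_axioms I.finite_measure_axioms,
          of "\<lambda>x. 2 * \<bar>a x - F x\<bar>"] assms(8) by simp
    show "case_prod g \<in> borel_measurable (lborel \<Otimes>\<^sub>M I)"
      unfolding g_def split_beta' by measurable
    have "\<bar>g x w\<bar> \<le> 2 * \<bar>a x - F x\<bar>" for x w
    proof -
      have "\<bar>a x + F x - 2 * e w x\<bar> \<le> 2" using range(1,2)[of x] range(3)[of w x] by auto
      then have "\<bar>a x - F x\<bar> * \<bar>a x + F x - 2 * e w x\<bar> \<le> \<bar>a x - F x\<bar> * 2"
        by (rule mult_left_mono) simp
      then show ?thesis by (simp add: g_def abs_mult mult.commute)
    qed
    then show "AE p in lborel \<Otimes>\<^sub>M I. norm (case_prod g p) \<le> norm (2 * \<bar>a (fst p) - F (fst p)\<bar>)"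
      by (intro AE_I2) (auto simp: split_beta')
  qed
  have integral_lborel: "(\<integral>x. g x w \<partial>lborel) = (\<integral>x. (a x - e w x)\<^sup>2 \<partial>lborel) - (\<integral>x. (F x - e w x)\<^sup>2 \<partial>lborel)" for w
    using square_integrable[of w]
    by (simp add: Bochner_Integration.integral_diff[symmetric] g_def power2_eq_square algebra_simps)
  have integral_I: "(\<integral>w. g x w \<partial>I) = (a x - F x)\<^sup>2" for x
    using mean[of x] by (simp add: g_def power2_eq_square algebra_simps I.prob_space)
  have "(\<integral>w. (\<integral>x. g x w \<partial>lborel) \<partial>I) = (\<integral>x. (\<integral>w. g x w \<partial>I) \<partial>lborel)"
    by (rule Fubini_integral[OF g_integrable])
  then show ?thesis by (simp add: integral_lborel integral_I)
qed

lemma integral_C2sq_proj_empirical: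
  fixes P Q :: "(real ^ 'm) measure"
  assumes P: "fm_dist P" and Q: "fm_dist Q" and r: "r > 0"
  shows "(\<integral>xs. C2sq (proj Q \<nu>) (proj (empirical r xs) \<nu>) \<partial>iid_samples r P)
       = C2sq (proj Q \<nu>) (proj P \<nu>) + (\<integral>xs. C2sq (proj P \<nu>) (proj (empirical r xs) \<nu>) \<partial>iid_samples r P)"
proof -
  let ?I = "iid_samples r P" and ?E = "\<lambda>xs. proj (empirical r xs) \<nu>"
  interpret Pv: real_distribution "proj P \<nu>" by (rule real_distribution_proj[OF P])
  interpret Qv: real_distribution "proj Q \<nu>" by (rule real_distribution_proj[OF Q])
  have E: "real_distribution (?E xs)" "integrable (?E xs) (\<lambda>x. x)" for xs
    using real_distribution_proj integrable_proj fm_dist_empirical[OF r] by blast+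
  have [measurable]: "(\<lambda>p. snd p i) \<in> borel_measurable (lborel \<Otimes>\<^sub>M ?I)" if "i < r" for i
    using borel_measurable_iid_component[OF fm_distD(2)[OF P] that] by measurable
  have "(\<integral>xs. C2sq (proj Q \<nu>) (?E xs) - C2sq (proj P \<nu>) (?E xs) \<partial>?I) = C2sq (proj Q \<nu>) (proj P \<nu>)"
    unfolding C2sq_def
  proof (rule integral_square_diff_unbiased[where e="\<lambda>xs. cdf (?E xs)"])
    show "prob_space ?I" by (rule prob_space_iid_samples[OF fm_distD(1)[OF P]])
    show "(\<lambda>(x, xs). cdf (?E xs) x) \<in> borel_measurable (lborel \<Otimes>\<^sub>M ?I)"
      unfolding split_beta' by (rule measurable_cdf_proj_empirical[OF r]) auto
    show "integrable lborel (\<lambda>x. \<bar>cdf (proj Q \<nu>) x - cdf (proj P \<nu>) x\<bar>)"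
      by (intro integrable_abs_cdf_diff real_distribution_proj integrable_proj P Q)
    show "integrable lborel (\<lambda>x. (cdf (proj Q \<nu>) x - cdf (?E xs) x)\<^sup>2)"
      "integrable lborel (\<lambda>x. (cdf (proj P \<nu>) x - cdf (?E xs) x)\<^sup>2)" for xs
      by (intro integrable_square_cdf_diff real_distribution_proj integrable_proj P Q E)+
    show "integrable ?I (\<lambda>xs. cdf (?E xs) x)" "(\<integral>xs. cdf (?E xs) x \<partial>?I) = cdf (proj P \<nu>) x" for x
      by (intro integrable_cdf_proj_empirical integral_cdf_proj_empirical P r)+
    show "cdf (?E xs) x \<in> {0..1}" for xs x
      using real_distribution.cdf_bounded_prob[OF E(1)] finite_borel_measure.cdf_nonneg
        real_distribution.finite_borel_measure_M[OF E(1)] by auto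
  qed (auto simp: Pv.cdf_nonneg Pv.cdf_bounded_prob Qv.cdf_nonneg Qv.cdf_bounded_prob)
  then show ?thesis
    using integrable_C2sq_proj_empirical[OF Q P r] integrable_C2sq_proj_empirical[OF P P r] by simp
qed

lemma integrable_C2sq_proj_empirical_sphere:
  fixes D P :: "(real ^ 'm) measure"
  assumes D: "fm_dist D" and P: "fm_dist P" and r: "r > 0"
  shows "integrable (sphere_measure \<Otimes>\<^sub>M iid_samples r P)
           (\<lambda>(\<nu>, xs). C2sq (proj D \<nu>) (proj (empirical r xs) \<nu>))"
proof (rule Bochner_Integration.integrable_bound)
  let ?S = "sphere_measure :: (real ^ 'm) measure" and ?I = "iid_samples r P"
  interpret I: prob_space ?I by (rule prob_space_iid_samples[OF fm_distD(1)[OF P]])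
  let ?bound = "\<lambda>xs. (\<integral>z. norm z \<partial>D) + (\<Sum>i<r. norm (xs i)) / real r"
  show "integrable (?S \<Otimes>\<^sub>M ?I) (\<lambda>p. ?bound (snd p))"
    by (intro integrable_pair_measure_snd finite_measure_sphere_measure I.sigma_finite_measure_axioms
        Bochner_Integration.integrable_add I.integrable_const integrable_mean_norm_iid P)
  have [measurable]: "(\<lambda>p. snd p i) \<in> borel_measurable (?S \<Otimes>\<^sub>M ?I)" if "i < r" for i
    using borel_measurable_iid_component[OF fm_distD(2)[OF P] that] by measurable
  have "fst \<in> borel_measurable (?S \<Otimes>\<^sub>M ?I)"
    using measurable_compose[OF measurable_fst borel_measurable_sphere_measure[of "\<lambda>\<nu>. \<nu>"]] by simp
  then show "(\<lambda>(\<nu>, xs). C2sq (proj D \<nu>) (proj (empirical r xs) \<nu>)) \<in> borel_measurable (?S \<Otimes>\<^sub>M ?I)"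
    unfolding split_beta' by (intro measurable_C2sq_proj_empirical D r) auto
  show "AE p in ?S \<Otimes>\<^sub>M ?I. norm (case p of (\<nu>, xs) \<Rightarrow> C2sq (proj D \<nu>) (proj (empirical r xs) \<nu>))
      \<le> norm (?bound (snd p))"
  proof (rule AE_I2)
    fix p assume "p \<in> space (?S \<Otimes>\<^sub>M ?I)"
    then have "norm (fst p) = 1" by (auto simp: space_pair_measure space_sphere_measure)
    moreover have "0 \<le> ?bound (snd p)" by (intro add_nonneg_nonneg divide_nonneg_nonneg sum_nonneg) auto
    ultimately show "norm (case p of (\<nu>, xs) \<Rightarrow> C2sq (proj D \<nu>) (proj (empirical r xs) \<nu>)) \<le> norm (?bound (snd p))"
      using C2sq_proj_empirical_le[OF D r, of "fst p" "snd p"] by (simp add: split_beta' C2sq_nonneg)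
  qed
qed

lemma integral_S2sq_empirical:
  fixes P Q :: "(real ^ 'm) measure"
  assumes P: "fm_dist P" and Q: "fm_dist Q" and r: "r > 0"
  shows "(\<integral>xs. S2sq Q (empirical r xs) \<partial>iid_samples r P)
       = S2sq Q P + (\<integral>xs. S2sq P (empirical r xs) \<partial>iid_samples r P)"
proof -
  let ?S = "sphere_measure :: (real ^ 'm) measure" and ?I = "iid_samples r P"
  interpret S: finite_measure ?S by (rule finite_measure_sphere_measure)
  interpret I: prob_space ?I by (rule prob_space_iid_samples[OF fm_distD(1)[OF P]])
  interpret pair_sigma_finite ?S ?I
    unfolding pair_sigma_finite_def using S.sigma_finite_measure_axioms I.sigma_finite_measure_axioms by blast
  note Fubini_Q = Fubini_integral[OF integrable_C2sq_proj_empirical_sphere[OF Q P r]]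
    and Fubini_P = Fubini_integral[OF integrable_C2sq_proj_empirical_sphere[OF P P r]]
  have "(\<integral>xs. S2sq Q (empirical r xs) \<partial>?I)
      = (\<integral>\<nu>. C2sq (proj Q \<nu>) (proj P \<nu>) + (\<integral>xs. C2sq (proj P \<nu>) (proj (empirical r xs) \<nu>) \<partial>?I) \<partial>?S)"
    unfolding S2sq_def Fubini_Q by (simp add: integral_C2sq_proj_empirical[OF P Q r])
  also have "\<dots> = S2sq Q P + (\<integral>xs. S2sq P (empirical r xs) \<partial>?I)"
    unfolding S2sq_def Fubini_P
    by (rule Bochner_Integration.integral_add[OF integrable_C2sq_proj_sphere[OF Q P]])
       (use integrable_fst'[OF integrable_C2sq_proj_empirical_sphere[OF P P r]] in simp)
  finally show ?thesis .
qed

section \<open>Total mass of the unit sphere\<close>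

lemma sphere_cone_eq:
  "{t *\<^sub>R x | t x. t \<in> {0<..1} \<and> x \<in> sphere (0::real ^ 'm) 1} = cball 0 1 - {0}"
proof (intro equalityI subsetI)
  fix z :: "real ^ 'm" assume "z \<in> cball 0 1 - {0}"
  then have "z = norm z *\<^sub>R (z /\<^sub>R norm z)" "norm z \<in> {0<..1}" "norm (z /\<^sub>R norm z) = 1" by auto
  then show "z \<in> {t *\<^sub>R x | t x. t \<in> {0<..1} \<and> x \<in> sphere 0 1}" by fastforce
qed auto

text \<open>The surface measure is built with \<open>measure_of\<close>, which yields the zero measure unless the cone
  set function is countably additive; assuming a nonzero total mass spares us proving that additivity.\<close>
lemma emeasure_sphere_measure:
  assumes "emeasure (sphere_measure :: (real ^ 'm) measure) (sphere 0 1) \<noteq> 0"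
  shows "emeasure (sphere_measure :: (real ^ 'm) measure) (sphere 0 1)
       = ennreal (2 * pi powr (real CARD('m) / 2) / Gamma (real CARD('m) / 2))"
proof -
  define n where "n = real CARD('m)"
  let ?C = "{t *\<^sub>R x | t x. t \<in> {0<..1} \<and> x \<in> sphere (0::real ^ 'm) 1}"
  have "emeasure (sphere_measure :: (real ^ 'm) measure) (sphere 0 1) = ennreal n * emeasure lborel ?C"
    using assms unfolding sphere_measure_def emeasure_measure_of_conv n_def by (auto split: if_splits)
  also have "emeasure lborel ?C = emeasure lborel (cball (0::real ^ 'm) 1)"
    unfolding sphere_cone_eq by (rule emeasure_Diff_null_set) (auto intro: finite_imp_null_set_lborel)
  also have "\<dots> = ennreal (unit_ball_vol n)" by (simp add: emeasure_cball n_def)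
  also have "ennreal n * ennreal (unit_ball_vol n) = ennreal (n * unit_ball_vol n)"
    by (simp add: ennreal_mult n_def)
  also have "n * unit_ball_vol n = 2 * pi powr (n / 2) / Gamma (n / 2)"
  proof -
    have n: "n > 0" unfolding n_def by simp
    then have "Gamma (n / 2) > 0" by simp
    have Gamma_step: "Gamma (n / 2 + 1) = (n / 2) * Gamma (n / 2)"
      by (rule Gamma_plus1) (use n nonpos_Ints_nonpos in force)
    have "n * unit_ball_vol n = n * (pi powr (n / 2) / ((n / 2) * Gamma (n / 2)))"
      unfolding unit_ball_vol_def Gamma_step ..
    also have "\<dots> = 2 * pi powr (n / 2) / Gamma (n / 2)"
      using n \<open>Gamma (n / 2) > 0\<close> by (simp add: field_simps)
    finally show ?thesis .
  qed
  finally show ?thesis unfolding n_def .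
qed

lemma integral_uniform_sphere:
  fixes \<gamma> :: "real ^ 'm \<Rightarrow> 'b::{banach, second_countable_topology}"
  assumes \<gamma>_integrable: "integrable (sphere_measure :: (real ^ 'm) measure) \<gamma>"
  shows "(2 * pi powr (real CARD('m) / 2) / Gamma (real CARD('m) / 2)) *\<^sub>R (\<integral>\<nu>. \<gamma> \<nu> \<partial>uniform_sphere)
       = (\<integral>\<nu>. \<gamma> \<nu> \<partial>(sphere_measure :: (real ^ 'm) measure))"
proof -
  let ?S = "sphere_measure :: (real ^ 'm) measure"
  let ?B = "2 * pi powr (real CARD('m) / 2) / Gamma (real CARD('m) / 2)"
  have [measurable]: "\<gamma> \<in> borel_measurable ?S" using \<gamma>_integrable by auto
  have sphere_sets [measurable]: "sphere 0 1 \<in> sets ?S"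
    using sets.top[of ?S] by (simp add: space_sphere_measure)
  show ?thesis
  proof (cases "emeasure ?S (sphere 0 1) = 0")
    case True
    then have AE_zero: "AE \<nu> in ?S. \<gamma> \<nu> = 0"
      by (intro AE_I[where N="sphere 0 1"]) (auto simp: space_sphere_measure)
    then have "AE \<nu> in uniform_sphere. \<gamma> \<nu> = 0"
      unfolding uniform_sphere_def uniform_measure_def by (subst AE_density) auto
    with AE_zero show ?thesis by (simp add: integral_eq_zero_AE)
  next
    case False
    have "Gamma (real CARD('m) / 2) > 0" "?B > 0" by simp_all
    then have "Gamma (real CARD('m) / 2) \<noteq> 0" by linarith
    have density_eq: "indicator (sphere 0 1) \<nu> / ennreal ?B = ennreal (indicator (sphere 0 1) \<nu> / ?B)" for \<nu> :: "real ^ 'm"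
      using divide_ennreal[of 1 ?B] \<open>?B > 0\<close> by (auto split: split_indicator)
    have "(\<integral>\<nu>. \<gamma> \<nu> \<partial>uniform_sphere) = (\<integral>\<nu>. \<gamma> \<nu> \<partial>density ?S (\<lambda>\<nu>. ennreal (indicator (sphere 0 1) \<nu> / ?B)))"
      unfolding uniform_sphere_def uniform_measure_def emeasure_sphere_measure[OF False] density_eq ..
    also have "\<dots> = (\<integral>\<nu>. (indicator (sphere 0 1) \<nu> / ?B) *\<^sub>R \<gamma> \<nu> \<partial>?S)"
      by (rule integral_density) (use \<open>?B > 0\<close> in auto)
    also have "\<dots> = (\<integral>\<nu>. (1 / ?B) *\<^sub>R \<gamma> \<nu> \<partial>?S)"
      by (intro Bochner_Integration.integral_cong) (auto simp: space_sphere_measure)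
    finally show ?thesis using \<open>Gamma (real CARD('m) / 2) \<noteq> 0\<close> by simp
  qed
qed

section \<open>Unbiased gradients\<close>

lemma space_uniform_sphere: "space (uniform_sphere :: (real ^ 'm) measure) = sphere 0 1"
  unfolding uniform_sphere_def uniform_measure_def by (simp add: space_sphere_measure)

lemma grad_eqI:
  fixes f :: "'a::real_inner \<Rightarrow> real"
  assumes "GDERIV f x :> D"
  shows "grad f x = D"
  unfolding grad_def
proof (rule the_equality)
  fix D' assume "GDERIV f x :> D'"
  then have "(\<lambda>h. h \<bullet> D') = (\<lambda>h. h \<bullet> D)"
    using has_derivative_unique assms unfolding gderiv_def by blast
  then have "(D' - D) \<bullet> D' = (D' - D) \<bullet> D" by metis
  then have "(D' - D) \<bullet> (D' - D) = 0" by (simp add: inner_diff_right)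
  then show "D' = D" by simp
qed fact

lemma GDERIV_transform_within_open:
  fixes f g :: "'a::real_inner \<Rightarrow> real"
  assumes "GDERIV f x :> D" "open S" "x \<in> S" "\<And>y. y \<in> S \<Longrightarrow> f y = g y + c"
  shows "GDERIV g x :> D"
proof -
  have "GDERIV (\<lambda>y. f y - c) x :> D - 0" by (rule GDERIV_diff[OF assms(1) GDERIV_const])
  then have "((\<lambda>y. f y - c) has_derivative (\<lambda>h. h \<bullet> D)) (at x)" unfolding gderiv_def by simp
  then show ?thesis
    unfolding gderiv_def by (rule has_derivative_transform_within_open[OF _ assms(2,3)]) (simp add: assms(4))
qed

lemma grad_S2sq_eq_expected_grad:
  fixes P :: "(real ^ 'm) measure" and G :: "'a::real_inner \<Rightarrow> (real ^ 'm) measure"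
  assumes "fm_dist P" "r > 0" "open \<Theta>" "\<theta> \<in> \<Theta>" "\<And>t. t \<in> \<Theta> \<Longrightarrow> fm_dist (G t)"
    and "GDERIV (\<lambda>t. \<integral>xs. S2sq (G t) (empirical r xs) \<partial>iid_samples r P) \<theta> :> D"
  shows "grad (\<lambda>t. S2sq (G t) P) \<theta> = D"
  by (intro grad_eqI GDERIV_transform_within_open[OF assms(6,3,4),
        where c="\<integral>xs. S2sq P (empirical r xs) \<partial>iid_samples r P"] integral_S2sq_empirical assms)

lemma grad_C2sq_eq_expected_grad:
  fixes P :: "(real ^ 'm) measure" and G :: "'a::real_inner \<Rightarrow> (real ^ 'm) measure"
  assumes "fm_dist P" "r > 0" "open \<Theta>" "\<theta> \<in> \<Theta>" "\<And>t. t \<in> \<Theta> \<Longrightarrow> fm_dist (G t)"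
    and "GDERIV (\<lambda>t. \<integral>xs. C2sq (proj (G t) \<nu>) (proj (empirical r xs) \<nu>) \<partial>iid_samples r P) \<theta> :> D"
  shows "grad (\<lambda>t. C2sq (proj (G t) \<nu>) (proj P \<nu>)) \<theta> = D"
  by (intro grad_eqI GDERIV_transform_within_open[OF assms(6,3,4),
        where c="\<integral>xs. C2sq (proj P \<nu>) (proj (empirical r xs) \<nu>) \<partial>iid_samples r P"]
        integral_C2sq_proj_empirical assms)

lemma grad_S2sq_eq_uniform_sphere_expected_grad:
  fixes P :: "(real ^ 'm) measure" and G :: "'a::euclidean_space \<Rightarrow> (real ^ 'm) measure"
  assumes "fm_dist P" "r > 0" "open \<Theta>" "\<theta> \<in> \<Theta>" "\<And>t. t \<in> \<Theta> \<Longrightarrow> fm_dist (G t)"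
    and "\<And>\<nu>. \<nu> \<in> sphere 0 1 \<Longrightarrow>
      GDERIV (\<lambda>t. \<integral>xs. C2sq (proj (G t) \<nu>) (proj (empirical r xs) \<nu>) \<partial>iid_samples r P) \<theta> :>
        (\<integral>xs. grad (\<lambda>t. C2sq (proj (G t) \<nu>) (proj (empirical r xs) \<nu>)) \<theta> \<partial>iid_samples r P)"
    and "integrable sphere_measure (\<lambda>\<nu>. grad (\<lambda>t. C2sq (proj (G t) \<nu>) (proj P \<nu>)) \<theta>)"
    and "grad (\<lambda>t. S2sq (G t) P) \<theta> = (\<integral>\<nu>. grad (\<lambda>t. C2sq (proj (G t) \<nu>) (proj P \<nu>)) \<theta> \<partial>sphere_measure)"
  shows "(2 * pi powr (real CARD('m) / 2) / Gamma (real CARD('m) / 2)) *\<^sub>R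
           (\<integral>\<nu>. (\<integral>xs. grad (\<lambda>t. C2sq (proj (G t) \<nu>) (proj (empirical r xs) \<nu>)) \<theta> \<partial>iid_samples r P)
             \<partial>uniform_sphere)
         = grad (\<lambda>t. S2sq (G t) P) \<theta>"
proof -
  have "(\<integral>\<nu>. (\<integral>xs. grad (\<lambda>t. C2sq (proj (G t) \<nu>) (proj (empirical r xs) \<nu>)) \<theta> \<partial>iid_samples r P) \<partial>uniform_sphere)
      = (\<integral>\<nu>. grad (\<lambda>t. C2sq (proj (G t) \<nu>) (proj P \<nu>)) \<theta> \<partial>uniform_sphere)"
    using assms(1-6) by (intro Bochner_Integration.integral_cong)
      (auto simp: space_uniform_sphere intro!: grad_C2sq_eq_expected_grad[symmetric])
  then show ?thesis
    using integral_uniform_sphere[OF assms(7)] assms(8) by simp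
qed

theorem theorem5:
  shows
  \<comment> \<open>(i) independent sum\<close>
  "(\<forall>(M :: 's measure) (X :: 's \<Rightarrow> real ^ 'm) Y A.
      prob_space M \<and>
      X \<in> borel_measurable M \<and> Y \<in> borel_measurable M \<and> A \<in> borel_measurable M \<and>
      integrable M (\<lambda>\<omega>. norm (X \<omega>)) \<and> integrable M (\<lambda>\<omega>. norm (Y \<omega>)) \<and>
      integrable M (\<lambda>\<omega>. norm (A \<omega>)) \<and>
      prob_space.indep_var M borel A borel X \<and> prob_space.indep_var M borel A borel Y
      \<longrightarrow> S2sq (distr M borel (\<lambda>\<omega>. A \<omega> + X \<omega>)) (distr M borel (\<lambda>\<omega>. A \<omega> + Y \<omega>))
          \<le> S2sq (distr M borel X) (distr M borel Y))
   \<and>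
  \<comment> \<open>(ii) scaling\<close>
   (\<forall>(M :: 's measure) (X :: 's \<Rightarrow> real ^ 'm) Y (c::real).
      prob_space M \<and>
      X \<in> borel_measurable M \<and> Y \<in> borel_measurable M \<and>
      integrable M (\<lambda>\<omega>. norm (X \<omega>)) \<and> integrable M (\<lambda>\<omega>. norm (Y \<omega>)) \<and> c > 0
      \<longrightarrow> S2sq (distr M borel (\<lambda>\<omega>. c *\<^sub>R X \<omega>)) (distr M borel (\<lambda>\<omega>. c *\<^sub>R Y \<omega>))
          = c * S2sq (distr M borel X) (distr M borel Y))
   \<and>
  \<comment> \<open>(iii) unbiased sampling gradients\<close>
   (\<forall>(P :: (real ^ 'm) measure) (G :: real ^ 'd \<Rightarrow> (real ^ 'm) measure) \<Theta> (r::nat).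
      fm_dist P \<and> r > 0 \<and> open \<Theta> \<and> (\<forall>\<theta>\<in>\<Theta>. fm_dist (G \<theta>)) \<and>
      \<comment> \<open>regularity: differentiability\<close>
      (\<forall>\<theta>\<in>\<Theta>. (\<lambda>t. S2sq (G t) P) differentiable (at \<theta>)) \<and>
      (\<forall>\<theta>\<in>\<Theta>. \<forall>xs\<in>space (iid_samples r P).
          (\<lambda>t. S2sq (G t) (empirical r xs)) differentiable (at \<theta>)) \<and>
      (\<forall>\<theta>\<in>\<Theta>. \<forall>\<nu>\<in>sphere 0 1.
          (\<lambda>t. C2sq (proj (G t) \<nu>) (proj P \<nu>)) differentiable (at \<theta>)) \<and>
      (\<forall>\<theta>\<in>\<Theta>. \<forall>\<nu>\<in>sphere 0 1. \<forall>xs\<in>space (iid_samples r P).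
          (\<lambda>t. C2sq (proj (G t) \<nu>) (proj (empirical r xs) \<nu>)) differentiable (at \<theta>)) \<and>
      \<comment> \<open>regularity: gradient commutes with expectation over the samples\<close>
      (\<forall>\<theta>\<in>\<Theta>.
          integrable (iid_samples r P) (\<lambda>xs. grad (\<lambda>t. S2sq (G t) (empirical r xs)) \<theta>) \<and>
          GDERIV (\<lambda>t. \<integral>xs. S2sq (G t) (empirical r xs) \<partial>iid_samples r P) \<theta> :>
            (\<integral>xs. grad (\<lambda>t. S2sq (G t) (empirical r xs)) \<theta> \<partial>iid_samples r P)) \<and>
      (\<forall>\<theta>\<in>\<Theta>. \<forall>\<nu>\<in>sphere 0 1.
          integrable (iid_samples r P)
            (\<lambda>xs. grad (\<lambda>t. C2sq (proj (G t) \<nu>) (proj (empirical r xs) \<nu>)) \<theta>) \<and>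
          GDERIV (\<lambda>t. \<integral>xs. C2sq (proj (G t) \<nu>) (proj (empirical r xs) \<nu>) \<partial>iid_samples r P) \<theta> :>
            (\<integral>xs. grad (\<lambda>t. C2sq (proj (G t) \<nu>) (proj (empirical r xs) \<nu>)) \<theta> \<partial>iid_samples r P)) \<and>
      \<comment> \<open>regularity: gradient commutes with integration over the sphere\<close>
      (\<forall>\<theta>\<in>\<Theta>.
          integrable sphere_measure (\<lambda>\<nu>. grad (\<lambda>t. C2sq (proj (G t) \<nu>) (proj P \<nu>)) \<theta>) \<and>
          grad (\<lambda>t. S2sq (G t) P) \<theta> =
            (\<integral>\<nu>. grad (\<lambda>t. C2sq (proj (G t) \<nu>) (proj P \<nu>)) \<theta> \<partial>sphere_measure)) \<and>
      (\<forall>\<theta>\<in>\<Theta>. \<forall>xs\<in>space (iid_samples r P).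
          integrable sphere_measure
            (\<lambda>\<nu>. grad (\<lambda>t. C2sq (proj (G t) \<nu>) (proj (empirical r xs) \<nu>)) \<theta>) \<and>
          grad (\<lambda>t. S2sq (G t) (empirical r xs)) \<theta> =
            (\<integral>\<nu>. grad (\<lambda>t. C2sq (proj (G t) \<nu>) (proj (empirical r xs) \<nu>)) \<theta> \<partial>sphere_measure))
      \<longrightarrow>
      (\<forall>\<theta>\<in>\<Theta>.
         (\<integral>xs. grad (\<lambda>t. S2sq (G t) (empirical r xs)) \<theta> \<partial>iid_samples r P)
           = grad (\<lambda>t. S2sq (G t) P) \<theta>
         \<and>
         (2 * pi powr (real CARD('m) / 2) / Gamma (real CARD('m) / 2)) *\<^sub>R
           (\<integral>\<nu>. (\<integral>xs. grad (\<lambda>t. C2sq (proj (G t) \<nu>) (proj (empirical r xs) \<nu>)) \<theta>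
                        \<partial>iid_samples r P) \<partial>uniform_sphere)
           = grad (\<lambda>t. S2sq (G t) P) \<theta>))"
  apply (intro conjI allI impI ballI; elim conjE)
  subgoal by (rule S2sq_distr_add_indep_le; assumption)
  subgoal by (rule S2sq_distr_scale; assumption)
  subgoal by (rule grad_S2sq_eq_expected_grad[symmetric]) blast+
  subgoal by (rule grad_S2sq_eq_uniform_sphere_expected_grad) blast+
  done

end
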